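(* For the canonical collection $\mathcal{S}$, $$B(\mathcal{S}):=\int_0^\infty\big|\{S\in\mathcal{S}: t\text{ is }S\text{-bad}\}\big|\,dt\ \le\ 2\cdot\mathrm{excess}(\mathrm{OPT}).$$
   Context: Steiner Forest: finite undirected graph $G=(V,E)$ with non-negative edge costs $(c_e)_{e\in E}$ and a set $\mathcal{D}$ of demand pairs $\{a,b\}\subseteq V$ (partners); feasible solutions are $F\subseteq E$ with each demand pair in one connected component of $(V,F)$, of cost $c(F)=\sum_{e\in F}c_e$. $\mathrm{OPT}$ is a fixed optimal solution that is inclusionwise minimal (no cost-$0$ edge can be omitted keeping feasibility). For $U\subseteq V$, $\delta(U)$ is the set of edges with exactly one endpoint in $U$; $U$ separates $S$ if $S\cap U\ne\emptyset$ and $S\setminus U\ne\emptyset$. The $\varepsilon$-extended moat-growing algorithm (fixed $\varepsilon\ge0$): time $t$ increases continuously from $0$ at unit rate; it maintains tight edges $F$ (initially empty), duals $y_S(t)\ge0$ (initially $0$), and budgets of components (initially $0$). $\mathcal{C}^t$ is the family of vertex sets of connected components of $(V,F)$. A component is demand-active if it contains a vertex not connected in $(V,F)$ to some partner; budget-active if not demand-active but with positive budget; active if either; $\mathcal{A}^t$ is the set of active components. Each $y_S$, $S\in\mathcal{A}^t$, grows at unit rate; budgets of demand-active components grow at rate $\varepsilon$ and of budget-active ones decrease at rate $1$; an edge $e$ with $\sum_{S:e\in\delta(S)}y_S(t)=c_e$ becomes tight and is added to $F$; merging components add budgets. $y_S=y_S(\infty)$; $\mathcal{U}_{\mathrm{sep}}$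 is the set of $U\in\mathrm{supp}(y)$ separating some demand pair; $\mathrm{excess}(F)=c(F)-\sum_{U\in\mathcal{U}_{\mathrm{sep}}}y_U$. The deactivation time $\tau_v$ of $v$ is the largest $t$ such that for all $s<t$, $v$ lies in a set of $\mathcal{A}^s$. Vertices $u,v$ are actively connected if for some $t$ they lie in a common set of $\mathcal{C}^t$ and $\tau_u,\tau_v\ge t$ (an equivalence relation). Canonical collection $\mathcal{S}$: start with a family $\mathcal{F}$ in which each tree of $\mathrm{OPT}$ is its own forest; for each $U\in\mathcal{U}_{\mathrm{sep}}$, merge all forests of $\mathcal{F}$ that connect some demand pair separated by $U$ into a single forest. For each $F\in\mathcal{F}$ let $r_F$ be a vertex of $F$ with maximum deactivation time; for each connected component $T$ of $F$, let $S$ be the set of vertices of $T$ actively connected to $r_F$; if $S\ne\emptyset$, add $S$ to $\mathcal{S}$. For $S\in\mathcal{S}$, a time $t\ge0$ is $S$-bad if some set $U\in\mathcal{A}^t$ that separates $S$ also separates some other set $S'\in\mathcal{S}\setminus\{S\}$; otherwise $t$ is $S$-good. *)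

theory Defs
  imports "HOL-Analysis.Analysis"
begin

text \<open>A finite undirected (multi)graph: vertex set V, edge set E, and
  endp e = the two-element set of endpoints of edge e.\<close>

definition adj :: "('e \<Rightarrow> 'v set) \<Rightarrow> 'e set \<Rightarrow> ('v \<times> 'v) set" where
  "adj endp F = {(u, w). \<exists>e\<in>F. endp e = {u, w}}"

definition comp :: "('e \<Rightarrow> 'v set) \<Rightarrow> 'e set \<Rightarrow> 'v \<Rightarrow> 'v set" where
  "comp endp F v = {w. (v, w) \<in> (adj endp F)\<^sup>*}"

definition comps :: "('e \<Rightarrow> 'v set) \<Rightarrow> 'v set \<Rightarrow> 'e set \<Rightarrow> 'v set set" where
  "comps endp V F = comp endp F ` V"

definition separates :: "'v set \<Rightarrow> 'v set \<Rightarrow> bool" where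
  "separates U S \<longleftrightarrow> S \<inter> U \<noteq> {} \<and> S - U \<noteq> {}"

definition feasible :: "'v set \<Rightarrow> 'e set \<Rightarrow> ('e \<Rightarrow> 'v set) \<Rightarrow> 'v set set \<Rightarrow> 'e set \<Rightarrow> bool" where
  "feasible V E endp D F \<longleftrightarrow> F \<subseteq> E \<and> (\<forall>d\<in>D. \<exists>C\<in>comps endp V F. d \<subseteq> C)"

definition cost :: "('e \<Rightarrow> real) \<Rightarrow> 'e set \<Rightarrow> real" where
  "cost c F = sum c F"

definition delta :: "'e set \<Rightarrow> ('e \<Rightarrow> 'v set) \<Rightarrow> 'v set \<Rightarrow> 'e set" where
  "delta E endp U = {e\<in>E. card (endp e \<inter> U) = 1}"

text \<open>A run is described by the family act t of active components at time t
  (the sets of A^t).  Everything else is derived from it.\<close>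

definition dem_active :: "'v set set \<Rightarrow> 'v set \<Rightarrow> bool" where
  "dem_active D C \<longleftrightarrow> (\<exists>d\<in>D. separates C d)"

definition yval :: "(real \<Rightarrow> 'v set set) \<Rightarrow> 'v set \<Rightarrow> real \<Rightarrow> real" where
  "yval act S t = measure lborel {s\<in>{0..<t}. S \<in> act s}"

text \<open>Budget of component C at time t: budgets of all earlier components
  contained in C (its ancestors, whose budgets were added up on merging) grow at
  rate eps while demand-active and decrease at rate 1 while budget-active.\<close>
definition budget :: "real \<Rightarrow> 'v set set \<Rightarrow> (real \<Rightarrow> 'v set set) \<Rightarrow> 'v set \<Rightarrow> real \<Rightarrow> real" where
  "budget eps D act C t =
     (\<Sum>S\<in>Pow C. (if dem_active D S then eps else -1) * yval act S t)"

definition tight :: "'v set \<Rightarrow> 'e set \<Rightarrow> ('e \<Rightarrow> 'v set) \<Rightarrow> ('e \<Rightarrow> real)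
    \<Rightarrow> (real \<Rightarrow> 'v set set) \<Rightarrow> real \<Rightarrow> 'e set" where
  "tight V E endp c act t =
     {e\<in>E. c e \<le> (\<Sum>S\<in>{S\<in>Pow V. e \<in> delta E endp S}. yval act S t)}"

definition comps_at :: "'v set \<Rightarrow> 'e set \<Rightarrow> ('e \<Rightarrow> 'v set) \<Rightarrow> ('e \<Rightarrow> real)
    \<Rightarrow> (real \<Rightarrow> 'v set set) \<Rightarrow> real \<Rightarrow> 'v set set" where
  "comps_at V E endp c act t = comps endp V (tight V E endp c act t)"

definition moat_run :: "'v set \<Rightarrow> 'e set \<Rightarrow> ('e \<Rightarrow> 'v set) \<Rightarrow> ('e \<Rightarrow> real)
    \<Rightarrow> 'v set set \<Rightarrow> real \<Rightarrow> (real \<Rightarrow> 'v set set) \<Rightarrow> bool" where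
  "moat_run V E endp c D eps act \<longleftrightarrow>
     (\<forall>t\<ge>0. act t = {C\<in>comps_at V E endp c act t.
                        dem_active D C \<or> budget eps D act C t > 0}) \<and>
     (\<forall>S. {s\<in>{0..}. S \<in> act s} \<in> sets lborel)"

definition yfin :: "(real \<Rightarrow> 'v set set) \<Rightarrow> 'v set \<Rightarrow> real" where
  "yfin act S = measure lborel {s\<in>{0..}. S \<in> act s}"

definition U_sep :: "'v set \<Rightarrow> 'v set set \<Rightarrow> (real \<Rightarrow> 'v set set) \<Rightarrow> 'v set set" where
  "U_sep V D act = {U. U \<subseteq> V \<and> yfin act U > 0 \<and> (\<exists>d\<in>D. separates U d)}"

definition excess :: "'v set \<Rightarrow> ('e \<Rightarrow> real) \<Rightarrow> 'v set set \<Rightarrow> (real \<Rightarrow> 'v set set)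
    \<Rightarrow> 'e set \<Rightarrow> real" where
  "excess V c D act F = cost c F - (\<Sum>U\<in>U_sep V D act. yfin act U)"

definition deact :: "(real \<Rightarrow> 'v set set) \<Rightarrow> 'v \<Rightarrow> real" where
  "deact act v = Sup {t. 0 \<le> t \<and> (\<forall>s. 0 \<le> s \<and> s < t \<longrightarrow> v \<in> \<Union>(act s))}"

definition act_conn :: "'v set \<Rightarrow> 'e set \<Rightarrow> ('e \<Rightarrow> 'v set) \<Rightarrow> ('e \<Rightarrow> real)
    \<Rightarrow> (real \<Rightarrow> 'v set set) \<Rightarrow> 'v \<Rightarrow> 'v \<Rightarrow> bool" where
  "act_conn V E endp c act u v \<longleftrightarrow>
     (\<exists>t\<ge>0. \<exists>C\<in>comps_at V E endp c act t. u \<in> C \<and> v \<in> C \<and>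
              t \<le> deact act u \<and> t \<le> deact act v)"

text \<open>Trees of OPT are (vertex sets of) components of (V,OPT).  Two trees end
  up in the same forest iff they are related by the equivalence closure of:
  both connect demand pairs separated by a common U in U_sep.\<close>
definition tree_rel :: "'v set \<Rightarrow> ('e \<Rightarrow> 'v set) \<Rightarrow> 'v set set \<Rightarrow> (real \<Rightarrow> 'v set set)
    \<Rightarrow> 'e set \<Rightarrow> ('v set \<times> 'v set) set" where
  "tree_rel V endp D act OPT =
     {(T1, T2). T1 \<in> comps endp V OPT \<and> T2 \<in> comps endp V OPT \<and>
        (\<exists>U\<in>U_sep V D act. \<exists>d1\<in>D. \<exists>d2\<in>D.
            separates U d1 \<and> separates U d2 \<and> d1 \<subseteq> T1 \<and> d2 \<subseteq> T2)}"

text \<open>the family of forests; a forest is represented by its set of trees\<close>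
definition forests :: "'v set \<Rightarrow> ('e \<Rightarrow> 'v set) \<Rightarrow> 'v set set \<Rightarrow> (real \<Rightarrow> 'v set set)
    \<Rightarrow> 'e set \<Rightarrow> 'v set set set" where
  "forests V endp D act OPT =
     (\<lambda>T. {T'. (T, T') \<in> (tree_rel V endp D act OPT)\<^sup>*}) ` comps endp V OPT"

text \<open>r assigns to each forest its chosen root r_F\<close>
definition canonical :: "'v set \<Rightarrow> 'e set \<Rightarrow> ('e \<Rightarrow> 'v set) \<Rightarrow> ('e \<Rightarrow> real)
    \<Rightarrow> 'v set set \<Rightarrow> (real \<Rightarrow> 'v set set) \<Rightarrow> 'e set \<Rightarrow> ('v set set \<Rightarrow> 'v) \<Rightarrow> 'v set set" where
  "canonical V E endp c D act OPT r =
     {S. \<exists>\<Phi>\<in>forests V endp D act OPT. \<exists>T\<in>\<Phi>.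
           S = {v\<in>T. act_conn V E endp c act v (r \<Phi>)} \<and> S \<noteq> {}}"

definition bad :: "(real \<Rightarrow> 'v set set) \<Rightarrow> 'v set set \<Rightarrow> 'v set \<Rightarrow> real \<Rightarrow> bool" where
  "bad act \<S> S t \<longleftrightarrow>
     (\<exists>U\<in>act t. separates U S \<and> (\<exists>S'\<in>\<S> - {S}. separates U S'))"

end

theory Submission
  imports Defs
begin

(*
  At time t a member S of the canonical collection is bad only because of some active U that
  separates S and another member; if U separates k \<ge> 2 members, it makes at most k of them
  bad, and k \<le> 2 (k - 1).  The members lie in distinct trees of OPT, and every tree separated
  by U contains an edge of OPT crossing U, so k \<le> |\<delta>(U) \<inter> OPT|; when U separates a demand
  pair, |\<delta>(U) \<inter> OPT| \<ge> 1 by feasibility.  Integrating over t therefore bounds B(\<S>) by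
  2 \<Sum>\<^sub>U (|\<delta>(U) \<inter> OPT| - [U \<in> U_sep]) y\<^sub>U.  The duals of the run are feasible (a set stops
  growing once a crossing edge is tight), so \<Sum>\<^sub>U |\<delta>(U) \<inter> OPT| y\<^sub>U \<le> c(OPT), and the bound
  is 2 excess(OPT).
*)

section \<open>Connected components\<close>

lemma sym_adj: "sym (adj endp F)"
  by (rule symI) (auto simp: adj_def insert_commute)

lemma comp_eq_if_mem:
  assumes "x \<in> comp endp F v"
  shows "comp endp F x = comp endp F v"
proof -
  have vx: "(v, x) \<in> (adj endp F)\<^sup>*" using assms unfolding comp_def by simp
  have xv: "(x, v) \<in> (adj endp F)\<^sup>*" using sym_rtrancl[OF sym_adj] vx by (rule symD)
  show ?thesis unfolding comp_def using vx xv by (blast intro: rtrancl_trans)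
qed

lemma comps_disjoint:
  assumes "T \<in> comps endp V F" "T' \<in> comps endp V F" "x \<in> T" "x \<in> T'"
  shows "T = T'"
proof -
  obtain v w where v: "T = comp endp F v" and w: "T' = comp endp F w"
    using assms(1,2) unfolding comps_def by blast
  have "T = comp endp F x" unfolding v by (rule sym, rule comp_eq_if_mem) (use assms(3) v in simp)
  also have "\<dots> = T'" unfolding w by (rule comp_eq_if_mem) (use assms(4) w in simp)
  finally show ?thesis .
qed

lemma comps_subset:
  assumes "T \<in> comps endp V F" "\<forall>e\<in>F. endp e \<subseteq> V"
  shows "T \<subseteq> V"
proof
  fix w assume "w \<in> T"
  obtain v where "v \<in> V" "T = comp endp F v" using assms(1) unfolding comps_def by blast
  with \<open>w \<in> T\<close> have "(v, w) \<in> (adj endp F)\<^sup>*" "v \<in> V" unfolding comp_def by simp_all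
  then show "w \<in> V"
  proof (induction rule: rtrancl_induct)
    case (step y z)
    then show ?case using assms(2) unfolding adj_def by auto
  qed
qed

lemma path_crosses_edge:
  assumes "(x, y) \<in> (adj endp F)\<^sup>*" "x \<in> U" "y \<notin> U"
  shows "\<exists>e\<in>F. card (endp e \<inter> U) = 1 \<and> endp e \<subseteq> comp endp F x"
  using assms(1,3)
proof (induction rule: rtrancl_induct)
  case base
  then show ?case using assms(2) by simp
next
  case (step y z)
  show ?case
  proof (cases "y \<in> U")
    case True
    from step.hyps(2) obtain e where e: "e \<in> F" "endp e = {y, z}" unfolding adj_def by blast
    have "endp e \<inter> U = {y}" using e(2) True step.prems by blast
    then have "card (endp e \<inter> U) = 1" by simp
    moreover have "endp e \<subseteq> comp endp F x"
      using e(2) step.hyps rtrancl_into_rtrancl[OF step.hyps] unfolding comp_def by simp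
    ultimately show ?thesis using e(1) by blast
  next
    case False
    then show ?thesis by (rule step.IH)
  qed
qed

lemma comp_crossing_edge:
  assumes "T \<in> comps endp V F" "x \<in> T" "y \<in> T" "x \<in> U" "y \<notin> U"
  shows "\<exists>e\<in>F. card (endp e \<inter> U) = 1 \<and> endp e \<subseteq> T"
proof -
  obtain v where T: "T = comp endp F v" using assms(1) unfolding comps_def by blast
  then have "T = comp endp F x" using comp_eq_if_mem[of x endp F v] assms(2) by simp
  with assms(3) have "(x, y) \<in> (adj endp F)\<^sup>*" unfolding comp_def by simp
  from path_crosses_edge[OF this assms(4,5)] \<open>T = comp endp F x\<close> show ?thesis by simp
qed

lemma edge_not_crossing_comp:
  assumes "e \<in> F" "card (endp e) = 2"
  shows "card (endp e \<inter> comp endp F v) \<noteq> 1"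
proof -
  obtain a b where ab: "endp e = {a, b}" "a \<noteq> b" using assms(2) by (meson card_2_iff)
  then have "(a, b) \<in> adj endp F" "(b, a) \<in> adj endp F"
    using assms(1) unfolding adj_def by (auto simp: insert_commute)
  then have "a \<in> comp endp F v \<longleftrightarrow> b \<in> comp endp F v"
    unfolding comp_def using rtrancl_into_rtrancl[of v _ "adj endp F"] by blast
  then show ?thesis using ab by (cases "a \<in> comp endp F v") (auto simp: Int_insert_left)
qed

section \<open>Time spent in a set of times\<close>

definition time_in :: "real set \<Rightarrow> real \<Rightarrow> real" where
  "time_in X t = measure lborel (X \<inter> {..<t})"

definition active_times :: "(real \<Rightarrow> 'v set set) \<Rightarrow> 'v set \<Rightarrow> real set" where
  "active_times act U = {s\<in>{0..}. U \<in> act s}"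

lemma yval_eq_time_in: "yval act U t = time_in (active_times act U) t"
  unfolding yval_def time_in_def active_times_def
  by (rule arg_cong[where f = "measure lborel"]) auto

lemma yfin_eq_measure: "yfin act U = measure lborel (active_times act U)"
  unfolding yfin_def active_times_def ..

lemma emeasure_Int_atLeastLessThan_finite:
  fixes X :: "real set"
  assumes "X \<in> sets lborel"
  shows "emeasure lborel (X \<inter> {s..<t}) < \<infinity>"
proof -
  have "emeasure lborel (X \<inter> {s..<t}) \<le> emeasure lborel (cbox s t)"
    by (rule emeasure_mono) auto
  also have "\<dots> < \<infinity>" by (rule emeasure_lborel_cbox_finite)
  finally show ?thesis .
qed

lemma emeasure_Int_lessThan_finite:
  fixes X :: "real set"
  assumes "X \<in> sets lborel" "X \<subseteq> {0..}"
  shows "emeasure lborel (X \<inter> {..<t}) < \<infinity>"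
proof -
  have "X \<inter> {..<t} = X \<inter> {0..<t}" using assms(2) by auto
  then show ?thesis using emeasure_Int_atLeastLessThan_finite[OF assms(1)] by simp
qed

lemma time_in_split:
  fixes X :: "real set"
  assumes "X \<in> sets lborel" "X \<subseteq> {0..}" "s \<le> t"
  shows "time_in X t = time_in X s + measure lborel (X \<inter> {s..<t})"
proof -
  have "X \<inter> {..<t} = (X \<inter> {..<s}) \<union> (X \<inter> {s..<t})" using assms(3) by auto
  moreover have "measure lborel ((X \<inter> {..<s}) \<union> (X \<inter> {s..<t}))
      = measure lborel (X \<inter> {..<s}) + measure lborel (X \<inter> {s..<t})"
    using assms(1) emeasure_Int_lessThan_finite[OF assms(1,2)]
      emeasure_Int_atLeastLessThan_finite[OF assms(1)]
    by (intro measure_Union) (auto simp: less_top[symmetric])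
  ultimately show ?thesis unfolding time_in_def by simp
qed

lemma time_in_nonpos: "X \<subseteq> {0..} \<Longrightarrow> t \<le> 0 \<Longrightarrow> time_in X t = 0"
  unfolding time_in_def by (subgoal_tac "X \<inter> {..<t} = {}") auto

lemma time_in_mono:
  fixes X :: "real set"
  assumes "X \<in> sets lborel" "X \<subseteq> {0..}" "s \<le> t"
  shows "time_in X s \<le> time_in X t"
  using time_in_split[OF assms] by simp

lemma time_in_eq_if_disjoint:
  fixes X :: "real set"
  assumes "X \<in> sets lborel" "X \<subseteq> {0..}" "s \<le> t" "X \<inter> {s..<t} = {}"
  shows "time_in X t = time_in X s"
  using time_in_split[OF assms(1-3)] assms(4) by simp

lemma lipschitz_time_in:
  fixes X :: "real set"
  assumes "X \<in> sets lborel" "X \<subseteq> {0..}"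
  shows "1-lipschitz_on S (time_in X)"
proof (rule lipschitz_onI)
  have *: "\<bar>time_in X t - time_in X s\<bar> \<le> t - s" if "s \<le> t" for s t
  proof -
    have "{s..<t} \<in> fmeasurable lborel"
      using that by (intro fmeasurableI) (auto simp: ennreal_less_top)
    then have "measure lborel (X \<inter> {s..<t}) \<le> measure lborel {s..<t}"
      using assms(1) by (intro measure_mono_fmeasurable) auto
    also have "\<dots> = t - s"
      using that by (simp add: measure_def)
    finally show ?thesis using time_in_split[OF assms that] by simp
  qed
  show "dist (time_in X x) (time_in X y) \<le> 1 * dist x y" for x y
    using *[of x y] *[of y x] by (cases "x \<le> y") (auto simp: dist_real_def abs_minus_commute)
qed simp

lemma time_in_tendsto_measure:
  fixes X :: "real set"
  assumes X: "X \<in> sets lborel" "X \<subseteq> {0..}" and bounded: "\<And>t. time_in X t \<le> B"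
  shows "emeasure lborel X < \<infinity>" and "(\<lambda>n. time_in X (real n)) \<longlonglongrightarrow> measure lborel X"
proof -
  define Y where "Y n = X \<inter> {..<real n}" for n
  have Y: "range Y \<subseteq> sets lborel" "incseq Y"
    unfolding Y_def incseq_def using X(1) by auto
  have "(\<Union>n. Y n) = X"
  proof
    show "X \<subseteq> (\<Union>n. Y n)"
    proof
      fix x assume "x \<in> X"
      moreover obtain n :: nat where "x < real n" using reals_Archimedean2 by blast
      ultimately show "x \<in> (\<Union>n. Y n)" unfolding Y_def by blast
    qed
  qed (auto simp: Y_def)
  have "emeasure lborel (Y n) \<le> ennreal B" for n
    using emeasure_Int_lessThan_finite[OF X] bounded[of "real n"]
    unfolding Y_def time_in_def
    by (simp add: emeasure_eq_ennreal_measure less_top[symmetric] ennreal_leI)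
  then have "(SUP n. emeasure lborel (Y n)) \<le> ennreal B" by (rule SUP_least)
  then have "emeasure lborel X \<le> ennreal B"
    using SUP_emeasure_incseq[OF Y] \<open>(\<Union>n. Y n) = X\<close> by simp
  then show finite: "emeasure lborel X < \<infinity>"
    unfolding infinity_ennreal_def using ennreal_less_top by (rule le_less_trans)
  have "(\<lambda>n. measure lborel (Y n)) \<longlonglongrightarrow> measure lborel X"
    using Lim_measure_incseq[OF Y] \<open>(\<Union>n. Y n) = X\<close> finite by simp
  then show "(\<lambda>n. time_in X (real n)) \<longlonglongrightarrow> measure lborel X"
    unfolding Y_def time_in_def .
qed

section \<open>Feasibility of the duals of a moat-growing run\<close>

locale moat_instance =
  fixes V :: "'v set" and E :: "'e set" and endp :: "'e \<Rightarrow> 'v set"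
    and c :: "'e \<Rightarrow> real" and D :: "'v set set" and eps :: real
    and act :: "real \<Rightarrow> 'v set set"
  assumes finite_V: "finite V" and finite_E: "finite E"
    and edges: "\<forall>e\<in>E. endp e \<subseteq> V \<and> card (endp e) = 2"
    and cost_nonneg: "\<forall>e\<in>E. 0 \<le> c e"
    and run: "moat_run V E endp c D eps act"
begin

lemma active_comp:
  assumes "0 \<le> t" "U \<in> act t"
  shows "\<exists>v\<in>V. U = comp endp (tight V E endp c act t) v"
proof -
  have "act t \<subseteq> comps_at V E endp c act t" using run assms(1) unfolding moat_run_def by blast
  then show ?thesis using assms(2) unfolding comps_at_def comps_def by blast
qed

lemma active_subset:
  assumes "0 \<le> t" "U \<in> act t"
  shows "U \<subseteq> V"
proof -
  obtain v where "v \<in> V" "U = comp endp (tight V E endp c act t) v"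
    using active_comp[OF assms] by blast
  moreover have "\<forall>e\<in>tight V E endp c act t. endp e \<subseteq> V" using edges unfolding tight_def by auto
  ultimately show ?thesis using comps_subset[of U endp V "tight V E endp c act t"]
    unfolding comps_def by blast
qed

lemma active_times_measurable: "active_times act U \<in> sets lborel"
  using run unfolding moat_run_def active_times_def by blast

lemma active_times_nonneg: "active_times act U \<subseteq> {0..}"
  unfolding active_times_def by auto

lemmas active_times_measurable_nonneg = active_times_measurable active_times_nonneg

text \<open>Once the duals of the sets crossing e sum to c e, the edge e is tight, and a component
  of tight edges never crosses it; so no crossing set is active anymore and the sum stays
  at c e.\<close>
lemma dual_feasible:
  assumes "e \<in> E"
  shows "(\<Sum>U\<in>{U\<in>Pow V. e \<in> delta E endp U}. yval act U t) \<le> c e"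
proof (rule ccontr)
  define P where "P = {U\<in>Pow V. e \<in> delta E endp U}"
  define g where "g t = (\<Sum>U\<in>P. time_in (active_times act U) t)" for t
  assume "\<not> ?thesis"
  then have exceeds: "c e < g t" unfolding g_def P_def yval_eq_time_in by simp
  have "0 \<le> c e" using cost_nonneg assms by blast
  have g_nonpos: "g x = 0" if "x \<le> 0" for x
    unfolding g_def using time_in_nonpos[OF active_times_nonneg that] by simp
  have "continuous_on {0..t} g"
    unfolding g_def using lipschitz_time_in[OF active_times_measurable_nonneg]
    by (intro continuous_on_sum) (blast intro: lipschitz_on_continuous_on)
  moreover have "0 \<le> t" using g_nonpos[of t] exceeds \<open>0 \<le> c e\<close> by force
  ultimately obtain s where s: "0 \<le> s" "s \<le> t" "g s = c e"
    using IVT'[of g 0 "c e" t] g_nonpos[of 0] \<open>0 \<le> c e\<close> exceeds by auto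
  have inactive: "U \<notin> act x" if late: "s \<le> x" and crossing: "U \<in> P" for x U
  proof
    assume "U \<in> act x"
    moreover have "0 \<le> x" using s(1) late by simp
    ultimately obtain v where v: "U = comp endp (tight V E endp c act x) v"
      using active_comp by blast
    have "g s \<le> g x"
      unfolding g_def using late by (intro sum_mono time_in_mono[OF active_times_measurable_nonneg])
    then have "c e \<le> g x" using s(3) by simp
    then have "e \<in> tight V E endp c act x"
      unfolding tight_def g_def P_def yval_eq_time_in using assms by simp
    then have "card (endp e \<inter> U) \<noteq> 1"
      unfolding v using edges assms by (intro edge_not_crossing_comp) auto
    then show False using crossing unfolding P_def delta_def by simp
  qed
  have "g t = g s"
    unfolding g_def using s inactive
    by (intro sum.cong refl time_in_eq_if_disjoint[OF active_times_measurable_nonneg]) (auto simp: active_times_def)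
  then show False using exceeds s(3) by simp
qed

lemma yval_le_cost_of_crossing_edge:
  assumes "e \<in> E" "U \<subseteq> V" "e \<in> delta E endp U"
  shows "yval act U t \<le> c e"
proof -
  have "yval act U t \<le> (\<Sum>U\<in>{U\<in>Pow V. e \<in> delta E endp U}. yval act U t)"
    using assms finite_V by (intro member_le_sum) (auto simp: yval_def)
  also have "\<dots> \<le> c e" using dual_feasible[OF assms(1)] .
  finally show ?thesis .
qed

lemma active_times_finite_if_crossed:
  assumes "e \<in> E" "U \<subseteq> V" "e \<in> delta E endp U"
  shows "emeasure lborel (active_times act U) < \<infinity>"
  using time_in_tendsto_measure(1)[OF active_times_measurable_nonneg]
    yval_le_cost_of_crossing_edge[OF assms] unfolding yval_eq_time_in by blast

lemma dual_feasible_final: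
  assumes "e \<in> E"
  shows "(\<Sum>U\<in>{U\<in>Pow V. e \<in> delta E endp U}. yfin act U) \<le> c e"
proof (rule LIMSEQ_le_const2)
  show "(\<lambda>n. \<Sum>U\<in>{U\<in>Pow V. e \<in> delta E endp U}. yval act U (real n))
      \<longlonglongrightarrow> (\<Sum>U\<in>{U\<in>Pow V. e \<in> delta E endp U}. yfin act U)"
    using time_in_tendsto_measure(2)[OF active_times_measurable_nonneg]
      yval_le_cost_of_crossing_edge[OF assms]
    unfolding yval_eq_time_in yfin_eq_measure by (intro tendsto_sum) blast
  show "\<exists>N. \<forall>n\<ge>N. (\<Sum>U\<in>{U\<in>Pow V. e \<in> delta E endp U}. yval act U (real n)) \<le> c e"
    using dual_feasible[OF assms] by blast
qed

lemma crossing_duals_le_cost: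
  assumes "F \<subseteq> E"
  shows "(\<Sum>U\<in>Pow V. real (card (delta E endp U \<inter> F)) * yfin act U) \<le> cost c F"
proof -
  have "finite F" using assms finite_E by (rule finite_subset)
  have "real (card (delta E endp U \<inter> F)) * yfin act U
      = (\<Sum>e\<in>F. if e \<in> delta E endp U then yfin act U else 0)" for U
  proof -
    have "delta E endp U \<inter> F = {e\<in>F. e \<in> delta E endp U}" by blast
    then show ?thesis using \<open>finite F\<close> by (simp add: sum.inter_filter[symmetric])
  qed
  then have "(\<Sum>U\<in>Pow V. real (card (delta E endp U \<inter> F)) * yfin act U)
      = (\<Sum>e\<in>F. \<Sum>U\<in>Pow V. if e \<in> delta E endp U then yfin act U else 0)"
    by (simp add: sum.swap[of _ "Pow V"])
  also have "\<dots> = (\<Sum>e\<in>F. \<Sum>U\<in>{U\<in>Pow V. e \<in> delta E endp U}. yfin act U)"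
    using finite_V by (intro sum.cong refl sum.inter_filter[symmetric]) simp
  also have "\<dots> \<le> (\<Sum>e\<in>F. c e)"
    using assms by (intro sum_mono dual_feasible_final) blast
  finally show ?thesis unfolding cost_def .
qed

end

section \<open>The canonical collection\<close>

lemma forest_eq_class:
  assumes "\<Phi> \<in> forests V endp D act F" "T \<in> \<Phi>"
  shows "T \<in> comps endp V F" "\<Phi> = {T'. (T, T') \<in> (tree_rel V endp D act F)\<^sup>*}"
proof -
  let ?R = "tree_rel V endp D act F"
  obtain T0 where T0: "T0 \<in> comps endp V F" "\<Phi> = {T'. (T0, T') \<in> ?R\<^sup>*}"
    using assms(1) unfolding forests_def by blast
  then have "(T0, T) \<in> ?R\<^sup>*" using assms(2) by simp
  then show "T \<in> comps endp V F"
    using T0(1) by (cases rule: rtranclE) (auto simp: tree_rel_def)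
  have "sym (?R\<^sup>*)" by (rule sym_rtrancl) (auto simp: tree_rel_def sym_def)
  with \<open>(T0, T) \<in> ?R\<^sup>*\<close> show "\<Phi> = {T'. (T, T') \<in> ?R\<^sup>*}"
    unfolding T0(2) by (blast intro: rtrancl_trans dest: symD)
qed

lemma canonical_in_comp:
  assumes "S \<in> canonical V E endp c D act F r"
  shows "\<exists>T\<in>comps endp V F. S \<subseteq> T"
  using assms forest_eq_class(1) unfolding canonical_def by blast

lemma canonical_subset_Pow:
  assumes "\<forall>e\<in>F. endp e \<subseteq> V"
  shows "canonical V E endp c D act F r \<subseteq> Pow V"
  using canonical_in_comp comps_subset[OF _ assms] by blast

lemma canonical_eq_if_same_comp:
  assumes "S \<in> canonical V E endp c D act F r" "S' \<in> canonical V E endp c D act F r"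
    and "T \<in> comps endp V F" "S \<subseteq> T" "S' \<subseteq> T"
  shows "S = S'"
proof -
  have canonical_form:
    "X = {v\<in>T. act_conn V E endp c act v (r {T'. (T, T') \<in> (tree_rel V endp D act F)\<^sup>*})}"
    if X_can: "X \<in> canonical V E endp c D act F r" and X_sub: "X \<subseteq> T" for X
  proof -
    obtain \<Phi> T0 where \<Phi>: "\<Phi> \<in> forests V endp D act F" "T0 \<in> \<Phi>"
      and X: "X = {v\<in>T0. act_conn V E endp c act v (r \<Phi>)}" "X \<noteq> {}"
      using X_can unfolding canonical_def by blast
    have "T0 = T"
      using comps_disjoint[OF forest_eq_class(1)[OF \<Phi>] assms(3)] X X_sub by blast
    with forest_eq_class(2)[OF \<Phi>] have "\<Phi> = {T'. (T, T') \<in> (tree_rel V endp D act F)\<^sup>*}"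
      by simp
    with X(1) \<open>T0 = T\<close> show ?thesis by simp
  qed
  show ?thesis using canonical_form[OF assms(1,4)] canonical_form[OF assms(2,5)] by simp
qed

lemma card_separated_le_crossing_edges:
  assumes "F \<subseteq> E" "finite F" "\<forall>e\<in>F. card (endp e) = 2"
    and in_comp: "\<forall>S\<in>\<S>. \<exists>T\<in>comps endp V F. S \<subseteq> T"
    and unique: "\<And>S S' T. S \<in> \<S> \<Longrightarrow> S' \<in> \<S> \<Longrightarrow> T \<in> comps endp V F \<Longrightarrow>
                   S \<subseteq> T \<Longrightarrow> S' \<subseteq> T \<Longrightarrow> S = S'"
  shows "card {S\<in>\<S>. separates U S} \<le> card (delta E endp U \<inter> F)"
proof (rule card_le_if_inj_on_rel
    [where r = "\<lambda>S e. \<exists>T\<in>comps endp V F. S \<subseteq> T \<and> endp e \<subseteq> T"])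
  show "finite (delta E endp U \<inter> F)" using assms(2) by simp
  show "\<exists>e. e \<in> delta E endp U \<inter> F \<and> (\<exists>T\<in>comps endp V F. S \<subseteq> T \<and> endp e \<subseteq> T)"
    if S: "S \<in> {S\<in>\<S>. separates U S}" for S
  proof -
    obtain T where T: "T \<in> comps endp V F" "S \<subseteq> T" using in_comp S by blast
    obtain x y where "x \<in> S" "x \<in> U" "y \<in> S" "y \<notin> U"
      using S unfolding separates_def by blast
    then obtain e where "e \<in> F" "card (endp e \<inter> U) = 1" "endp e \<subseteq> T"
      using comp_crossing_edge[OF T(1)] T(2) by blast
    then show ?thesis using T assms(1) unfolding delta_def by blast
  qed
  show "S = S'"
    if S: "S \<in> {S\<in>\<S>. separates U S}" and S': "S' \<in> {S\<in>\<S>. separates U S}"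
      and e: "e \<in> delta E endp U \<inter> F"
      and in_T: "\<exists>T\<in>comps endp V F. S \<subseteq> T \<and> endp e \<subseteq> T"
      and in_T': "\<exists>T\<in>comps endp V F. S' \<subseteq> T \<and> endp e \<subseteq> T"
    for S S' e
  proof -
    obtain T T' where T: "T \<in> comps endp V F" "S \<subseteq> T" "endp e \<subseteq> T"
      and T': "T' \<in> comps endp V F" "S' \<subseteq> T'" "endp e \<subseteq> T'"
      using in_T in_T' by blast
    have "endp e \<noteq> {}" using e assms(3) by fastforce
    then have "T = T'" using comps_disjoint[OF T(1) T'(1)] T(3) T'(3) by blast
    then show ?thesis using unique S S' T T' by blast
  qed
qed

lemma U_sep_crossed:
  assumes "feasible V E endp D F" "U \<in> U_sep V D act"
  shows "delta E endp U \<inter> F \<noteq> {}"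
proof -
  obtain d where d: "d \<in> D" "separates U d" using assms(2) unfolding U_sep_def by blast
  obtain T where T: "T \<in> comps endp V F" "d \<subseteq> T"
    using assms(1) d(1) unfolding feasible_def by blast
  obtain x y where "x \<in> d" "x \<in> U" "y \<in> d" "y \<notin> U"
    using d(2) unfolding separates_def by blast
  then obtain e where "e \<in> F" "card (endp e \<inter> U) = 1"
    using comp_crossing_edge[OF T(1)] T(2) by blast
  moreover have "F \<subseteq> E" using assms(1) unfolding feasible_def by simp
  ultimately have "e \<in> delta E endp U \<inter> F" unfolding delta_def by blast
  then show ?thesis by blast
qed

section \<open>Integrating the number of bad sets\<close>

text \<open>While U is active, it makes bad at most bad_weight of the members.\<close>
definition bad_weight :: "'v set set \<Rightarrow> 'v set \<Rightarrow> real" where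
  "bad_weight \<S> U = (let k = card {S\<in>\<S>. separates U S} in if 2 \<le> k then real k else 0)"

lemma bad_weight_nonneg [simp]: "0 \<le> bad_weight \<S> U"
  unfolding bad_weight_def Let_def by simp

lemma card_bad_le_sum_bad_weight:
  assumes "finite \<S>" "finite \<U>"
  shows "real (card {S\<in>\<S>. \<exists>U\<in>\<U>. separates U S \<and> (\<exists>S'\<in>\<S> - {S}. separates U S')})
    \<le> (\<Sum>U\<in>\<U>. bad_weight \<S> U)" (is "real (card ?bad) \<le> _")
proof -
  define \<U>2 where "\<U>2 = {U\<in>\<U>. 2 \<le> card {S\<in>\<S>. separates U S}}"
  have "?bad \<subseteq> (\<Union>U\<in>\<U>2. {S\<in>\<S>. separates U S})"
  proof
    fix S assume "S \<in> ?bad"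
    then obtain U S' where "S \<in> \<S>" "U \<in> \<U>" "separates U S" "S' \<in> \<S>" "S' \<noteq> S" "separates U S'"
      by blast
    moreover from this have "card {S, S'} \<le> card {S\<in>\<S>. separates U S}"
      using assms(1) by (intro card_mono) auto
    ultimately show "S \<in> (\<Union>U\<in>\<U>2. {S\<in>\<S>. separates U S})" unfolding \<U>2_def by auto
  qed
  then have "card ?bad \<le> card (\<Union>U\<in>\<U>2. {S\<in>\<S>. separates U S})"
    using assms(1) by (intro card_mono) (auto intro: rev_finite_subset)
  also have "\<dots> \<le> (\<Sum>U\<in>\<U>2. card {S\<in>\<S>. separates U S})"
    using assms(2) unfolding \<U>2_def by (intro card_UN_le) simp
  finally have "real (card ?bad) \<le> (\<Sum>U\<in>\<U>2. real (card {S\<in>\<S>. separates U S}))"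
    by (simp flip: of_nat_sum)
  also have "\<dots> = (\<Sum>U\<in>\<U>. bad_weight \<S> U)"
    unfolding \<U>2_def bad_weight_def Let_def using assms(2) by (simp add: sum.inter_filter)
  finally show ?thesis .
qed

lemma bad_weight_le:
  assumes "card {S\<in>\<S>. separates U S} \<le> n" and "P \<Longrightarrow> 1 \<le> n"
  shows "bad_weight \<S> U \<le> 2 * (real n - (if P then 1 else 0))"
  using assms unfolding bad_weight_def Let_def by auto

context moat_instance
begin

lemma bad_times_eq:
  "{t\<in>{0..}. bad act \<S> S t}
    = (\<Union>U\<in>{U\<in>Pow V. separates U S \<and> (\<exists>S'\<in>\<S> - {S}. separates U S')}. active_times act U)"
  unfolding bad_def active_times_def using active_subset by blast

lemma bad_count_measurable:
  assumes "finite \<S>"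
  shows "(\<lambda>t. indicator {0..} t *\<^sub>R real (card {S\<in>\<S>. bad act \<S> S t}))
    \<in> borel_measurable lborel"
proof -
  have "indicator {0..} t *\<^sub>R real (card {S\<in>\<S>. bad act \<S> S t})
      = (\<Sum>S\<in>\<S>. indicator {t\<in>{0..}. bad act \<S> S t} t)" for t :: real
    using assms by (simp add: indicator_def sum.If_cases Int_def)
  moreover have "{t\<in>{0..}. bad act \<S> S t} \<in> sets lborel" for S
    unfolding bad_times_eq using finite_V active_times_measurable by (intro sets.finite_UN) auto
  ultimately show ?thesis by (simp add: borel_measurable_sum borel_measurable_indicator)
qed

lemma bad_count_le_active_weights:
  assumes "finite \<S>" "0 \<le> t"
  shows "real (card {S\<in>\<S>. bad act \<S> S t})
    \<le> (\<Sum>U\<in>Pow V. bad_weight \<S> U * indicator (active_times act U) t)"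
proof -
  have "act t \<subseteq> Pow V" using active_subset assms(2) by blast
  then have "finite (act t)" using finite_V by (simp add: finite_subset)
  have "real (card {S\<in>\<S>. bad act \<S> S t}) \<le> (\<Sum>U\<in>act t. bad_weight \<S> U)"
    unfolding bad_def using card_bad_le_sum_bad_weight[OF assms(1) \<open>finite (act t)\<close>] .
  also have "\<dots> = (\<Sum>U\<in>Pow V. bad_weight \<S> U * indicator (active_times act U) t)"
    using finite_V \<open>act t \<subseteq> Pow V\<close> assms(2)
    by (intro sum.mono_neutral_cong_left) (auto simp: active_times_def)
  finally show ?thesis .
qed

lemma integrable_bad_weight_indicator:
  assumes "F \<subseteq> E" "U \<subseteq> V"
    and "card {S\<in>\<S>. separates U S} \<le> card (delta E endp U \<inter> F)"
  shows "integrable lborel (\<lambda>t. bad_weight \<S> U * indicator (active_times act U) t)"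
proof (rule integrable_mult_right)
  assume "bad_weight \<S> U \<noteq> 0"
  then have "2 \<le> card (delta E endp U \<inter> F)"
    using assms(3) unfolding bad_weight_def Let_def by (auto split: if_splits)
  then have "delta E endp U \<inter> F \<noteq> {}" by auto
  then obtain e where "e \<in> F" "e \<in> delta E endp U" by blast
  then have "emeasure lborel (active_times act U) < \<infinity>"
    using assms(1,2) by (intro active_times_finite_if_crossed) auto
  then show "integrable lborel (indicator (active_times act U) :: real \<Rightarrow> real)"
    using active_times_measurable by (intro integrable_real_indicator) auto
qed

lemma integral_bad_count_le:
  assumes "finite \<S>" "F \<subseteq> E"
    and count: "\<And>U. card {S\<in>\<S>. separates U S} \<le> card (delta E endp U \<inter> F)"
  shows "set_integrable lborel {0..} (\<lambda>t. real (card {S\<in>\<S>. bad act \<S> S t}))"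
    and "(LINT t:{0..}|lborel. real (card {S\<in>\<S>. bad act \<S> S t}))
      \<le> (\<Sum>U\<in>Pow V. bad_weight \<S> U * yfin act U)"
proof -
  define G where "G t = (\<Sum>U\<in>Pow V. bad_weight \<S> U * indicator (active_times act U) t)" for t
  have "integrable lborel G"
    unfolding G_def using assms(2) count
    by (intro Bochner_Integration.integrable_sum integrable_bad_weight_indicator) auto
  have G_integral: "integral\<^sup>L lborel G = (\<Sum>U\<in>Pow V. bad_weight \<S> U * yfin act U)"
    unfolding G_def using assms(2) count
    by (subst Bochner_Integration.integral_sum)
      (auto intro: integrable_bad_weight_indicator
        simp only: integral_mult_right_zero integral_indicator, simp add: yfin_eq_measure)
  have bounded: "norm (indicator {0..} t *\<^sub>R real (card {S\<in>\<S>. bad act \<S> S t})) \<le> G t"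
    for t :: real
    unfolding G_def using bad_count_le_active_weights[OF assms(1)]
    by (auto simp: indicator_def intro!: sum_nonneg)
  have integrable:
    "integrable lborel (\<lambda>t. indicator {0..} t *\<^sub>R real (card {S\<in>\<S>. bad act \<S> S t}))"
    using \<open>integrable lborel G\<close> bad_count_measurable[OF assms(1)]
  proof (rule Bochner_Integration.integrable_bound)
    show "AE t in lborel.
        norm (indicator {0..} t *\<^sub>R real (card {S\<in>\<S>. bad act \<S> S t})) \<le> norm (G t)"
      using bounded by (intro AE_I2) (metis abs_ge_self order_trans real_norm_def)
  qed
  then show "set_integrable lborel {0..} (\<lambda>t. real (card {S\<in>\<S>. bad act \<S> S t}))"
    unfolding set_integrable_def .
  have "(LINT t:{0..}|lborel. real (card {S\<in>\<S>. bad act \<S> S t})) \<le> integral\<^sup>L lborel G"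
    unfolding set_lebesgue_integral_def using integrable \<open>integrable lborel G\<close> bounded
    by (intro Bochner_Integration.integral_mono) auto
  then show "(LINT t:{0..}|lborel. real (card {S\<in>\<S>. bad act \<S> S t}))
      \<le> (\<Sum>U\<in>Pow V. bad_weight \<S> U * yfin act U)"
    unfolding G_integral .
qed

lemma sum_bad_weight_le_excess:
  assumes "feasible V E endp D F"
    and count: "\<And>U. card {S\<in>\<S>. separates U S} \<le> card (delta E endp U \<inter> F)"
  shows "(\<Sum>U\<in>Pow V. bad_weight \<S> U * yfin act U) \<le> 2 * excess V c D act F"
proof -
  have "F \<subseteq> E" using assms(1) unfolding feasible_def by simp
  then have "finite F" using finite_E by (rule finite_subset)
  have "(\<Sum>U\<in>Pow V. bad_weight \<S> U * yfin act U)
      \<le> (\<Sum>U\<in>Pow V. 2 * (real (card (delta E endp U \<inter> F))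
                       - (if U \<in> U_sep V D act then 1 else 0)) * yfin act U)"
  proof (intro sum_mono mult_right_mono bad_weight_le count)
    show "1 \<le> card (delta E endp U \<inter> F)" if "U \<in> U_sep V D act" for U
      using U_sep_crossed[OF assms(1) that] \<open>finite F\<close> by (simp add: Suc_le_eq card_gt_0_iff)
  qed (simp add: yfin_def)
  also have "\<dots> = 2 * ((\<Sum>U\<in>Pow V. real (card (delta E endp U \<inter> F)) * yfin act U)
      - (\<Sum>U\<in>U_sep V D act. yfin act U))"
  proof -
    have "(\<Sum>U\<in>U_sep V D act. yfin act U)
        = (\<Sum>U\<in>Pow V. if U \<in> U_sep V D act then yfin act U else 0)"
      using finite_V by (intro sum.mono_neutral_cong_left) (auto simp: U_sep_def)
    then show ?thesis
      by (simp add: sum_subtractf sum_distrib_left right_diff_distrib left_diff_distrib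
          flip: mult.assoc)
        (rule sum.cong; simp)
  qed
  also have "\<dots> \<le> 2 * excess V c D act F"
    unfolding excess_def using crossing_duals_le_cost[OF \<open>F \<subseteq> E\<close>] by simp
  finally show ?thesis .
qed

end

theorem lemma6p8:
  fixes V :: "'v set" and E :: "'e set" and endp :: "'e \<Rightarrow> 'v set"
    and c :: "'e \<Rightarrow> real" and D :: "'v set set" and eps :: real
    and act :: "real \<Rightarrow> 'v set set" and OPT :: "'e set"
    and r :: "'v set set \<Rightarrow> 'v"
  assumes "finite V" and "finite E"
    and "\<forall>e\<in>E. endp e \<subseteq> V \<and> card (endp e) = 2"
    and "\<forall>e\<in>E. 0 \<le> c e"
    and "\<forall>d\<in>D. d \<subseteq> V \<and> card d = 2"
    and "0 \<le> eps"
    and "moat_run V E endp c D eps act"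
    and "feasible V E endp D OPT"
    and "\<forall>F. feasible V E endp D F \<longrightarrow> cost c OPT \<le> cost c F"
    and "\<forall>e\<in>OPT. c e = 0 \<longrightarrow> \<not> feasible V E endp D (OPT - {e})"
    and "\<forall>\<Phi>\<in>forests V endp D act OPT. r \<Phi> \<in> \<Union>\<Phi> \<and>
           (\<forall>v\<in>\<Union>\<Phi>. deact act v \<le> deact act (r \<Phi>))"
  shows "let \<S> = canonical V E endp c D act OPT r;
             f = (\<lambda>t. real (card {S\<in>\<S>. bad act \<S> S t}))
         in set_integrable lborel {0..} f \<and>
            (LINT t:{0..}|lborel. f t) \<le> 2 * excess V c D act OPT"
proof -
  interpret moat_instance V E endp c D eps act
    using assms(1-4,7) by unfold_locales
  define \<S> where "\<S> = canonical V E endp c D act OPT r"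
  have "OPT \<subseteq> E" using assms(8) unfolding feasible_def by simp
  then have "finite OPT" using finite_E by (rule finite_subset)
  have "\<S> \<subseteq> Pow V"
    unfolding \<S>_def using \<open>OPT \<subseteq> E\<close> edges by (intro canonical_subset_Pow) blast
  then have "finite \<S>" using finite_V by (simp add: finite_subset)
  have count: "card {S\<in>\<S>. separates U S} \<le> card (delta E endp U \<inter> OPT)" for U
    unfolding \<S>_def using \<open>OPT \<subseteq> E\<close> \<open>finite OPT\<close> edges
    by (intro card_separated_le_crossing_edges[where V = V])
      (blast intro: canonical_in_comp | erule (4) canonical_eq_if_same_comp)+
  note bad_integral = integral_bad_count_le[OF \<open>finite \<S>\<close> \<open>OPT \<subseteq> E\<close> count]
  show ?thesis
    unfolding Let_def \<S>_def[symmetric]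
    using bad_integral sum_bad_weight_le_excess[OF assms(8) count] by simp
qed

end
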